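(* For real $0<y<2\pi$, $$\sum_{n=0}^{\infty} (-1)^n B_n R_n(y)=e^{y}\left(y\ln(1-e^{-y})-\mathrm{Li}_2(e^{-y})+\frac{\pi^2}{6}\right).$$
   Context: For an integer $n\ge 0$ and complex $y$, $R_n(y)=e^y-1-\frac{y}{1!}-\frac{y^2}{2!}-\dots-\frac{y^n}{n!}=e^y-\sum_{k=0}^n\frac{y^k}{k!}$. $B_n$ are the Bernoulli numbers, defined by $\frac{z}{e^z-1}=\sum_{n\ge0}B_n\frac{z^n}{n!}$ ($|z|<2\pi$). $\mathrm{Li}_2(z)=\sum_{n\ge1}\frac{z^n}{n^2}$ is the dilogarithm. *)

theory Defs
  imports "HOL-Analysis.Analysis" "HOL-Computational_Algebra.Formal_Power_Series"
begin

text \<open>Bernoulli numbers via their exponential generating function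
  z/(e^z - 1) = sum B_n z^n/n!, taken as a formal power series:
  (e^z - 1)/z is the FPS fps_shift 1 (fps_exp 1 - 1) (constant term 1),
  and z/(e^z-1) is its inverse.\<close>
definition bernoulli_num :: "nat \<Rightarrow> real" where
  "bernoulli_num n = fact n * fps_nth (inverse (fps_shift 1 (fps_exp (1::real) - 1))) n"

definition Rrem :: "nat \<Rightarrow> real \<Rightarrow> real" where
  "Rrem n y = exp y - (\<Sum>k\<le>n. y ^ k / fact k)"

definition Li2 :: "real \<Rightarrow> real" where
  "Li2 z = (\<Sum>n. z ^ (Suc n) / (real (Suc n))^2)"

end

theory Submission
  imports Defs "HOL-Complex_Analysis.Complex_Analysis" "HOL-Real_Asymp.Real_Asymp"
begin

text \<open>
  Let \<open>G(y)\<close> be the series and \<open>F(y) = y ln(1 - e\<^sup>-\<^sup>y) - Li\<^sub>2(e\<^sup>-\<^sup>y) + \<pi>\<^sup>2/6\<close>. Since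
  \<open>R\<^sub>n' = R\<^sub>n + y\<^sup>n/n!\<close>, termwise differentiation gives \<open>G' = G + \<Sum> B\<^sub>n (-y)\<^sup>n/n! = G + y/(1 - e\<^sup>-\<^sup>y)\<close>
  by the generating function of the Bernoulli numbers, which converges for \<open>|y| < 2\<pi>\<close>;
  moreover \<open>G(0) = 0\<close>. From \<open>Li\<^sub>2'(u) = -ln(1 - u)/u\<close> one gets \<open>F'(y) = y e\<^sup>-\<^sup>y/(1 - e\<^sup>-\<^sup>y)\<close>, so
  \<open>e\<^sup>y F(y)\<close> satisfies the same differential equation, and it tends to \<open>0\<close> as \<open>y \<rightarrow> 0\<^sup>+\<close> because
  \<open>Li\<^sub>2(1) = \<pi>\<^sup>2/6\<close>. The difference \<open>D\<close> of the two solves \<open>D' = D\<close> with \<open>D(0\<^sup>+) = 0\<close>, hence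
  \<open>e\<^sup>-\<^sup>y D(y)\<close> is constant zero.
\<close>

section \<open>The equation \<open>D' = D\<close>\<close>

lemma eq_0_if_has_real_derivative_self:
  fixes D :: "real \<Rightarrow> real"
  assumes "0 < y"
    and deriv: "\<And>x. x \<in> {0<..y} \<Longrightarrow> (D has_real_derivative D x) (at x)"
    and lim: "(D \<longlongrightarrow> 0) (at_right 0)"
  shows "D y = 0"
proof -
  define K where "K x = exp (- x) * D x" for x
  have K': "(K has_real_derivative 0) (at x)" if "x \<in> {0<..y}" for x
    unfolding K_def[abs_def]
    by (rule DERIV_cong, (use deriv[OF that] in \<open>auto intro!: derivative_eq_intros\<close>)[1]) simp
  have "\<exists>c. \<forall>x\<in>{0<..y}. K x = c"
    by (rule has_field_derivative_zero_constant) (simp_all add: has_field_derivative_at_within K')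
  then obtain c where c: "\<And>x. x \<in> {0<..y} \<Longrightarrow> K x = c"
    by blast
  have "(K \<longlongrightarrow> exp (- 0) * 0) (at_right 0)"
    unfolding K_def[abs_def] by (intro tendsto_intros lim)
  moreover have "(K \<longlongrightarrow> c) (at_right 0)"
    using c \<open>0 < y\<close> by (intro tendsto_eventually) (auto simp: eventually_at_right_field intro!: exI[of _ y])
  ultimately have "c = 0"
    using tendsto_unique[OF trivial_limit_at_right_real] by fastforce
  with c[of y] \<open>0 < y\<close> show ?thesis
    by (simp add: K_def)
qed

section \<open>The generating function of the Bernoulli numbers\<close>

definition fps_expm1_div_X :: "'a::field fps" where
  "fps_expm1_div_X = fps_shift 1 (fps_exp 1 - 1)"

lemma fps_expm1_div_X_nth [simp]:
  "fps_expm1_div_X $ n = (1 / fact (Suc n) :: 'a::field_char_0)"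
  by (simp add: fps_expm1_div_X_def algebra_simps)

lemma fps_nth_inverse_expm1_div_X:
  "inverse (fps_expm1_div_X :: complex fps) $ n = of_real (bernoulli_num n / fact n)"
proof -
  define C where "C = Abs_fps (\<lambda>n. complex_of_real (inverse (fps_expm1_div_X :: real fps) $ n))"
  have real_inverse: "fps_expm1_div_X * inverse fps_expm1_div_X = (1 :: real fps)"
    using inverse_mult_eq_1[of "fps_expm1_div_X :: real fps"] by (simp add: mult.commute)
  have "fps_expm1_div_X * C = 1"
  proof (rule fps_ext)
    fix n
    have "(fps_expm1_div_X * C) $ n =
          of_real ((fps_expm1_div_X * inverse (fps_expm1_div_X :: real fps)) $ n)"
      by (simp add: fps_mult_nth C_def)
    then show "(fps_expm1_div_X * C) $ n = 1 $ n"
      by (simp add: real_inverse fps_one_nth)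
  qed
  then have "inverse fps_expm1_div_X = C"
    by (rule fps_inverse_unique)
  then show ?thesis
    by (simp add: C_def bernoulli_num_def fps_expm1_div_X_def)
qed

lemma fps_conv_radius_expm1_div_X: "fps_conv_radius (fps_expm1_div_X :: complex fps) = \<infinity>"
proof -
  have "fps_conv_radius (fps_exp (1::complex) - 1) \<ge> min \<infinity> \<infinity>"
    using fps_conv_radius_diff[of "fps_exp (1::complex)" 1] by simp
  then show ?thesis
    by (simp add: fps_expm1_div_X_def)
qed

lemma eval_fps_expm1_div_X:
  fixes z :: complex
  shows "eval_fps fps_expm1_div_X z = (if z = 0 then 1 else (exp z - 1) / z)"
proof -
  have nonzero: "fps_exp (1::complex) - 1 \<noteq> 0"
  proof
    assume "fps_exp (1::complex) - 1 = 0"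
    then have "(fps_exp (1::complex) - 1) $ 1 = 0"
      by simp
    then show False
      by simp
  qed
  have "1 \<le> subdegree (fps_exp (1::complex) - 1)"
    by (rule subdegree_geI[OF nonzero]) simp
  moreover have "fps_conv_radius (fps_exp (1::complex) - 1) = \<infinity>"
    using fps_conv_radius_expm1_div_X by (simp add: fps_expm1_div_X_def)
  ultimately have "eval_fps fps_expm1_div_X z = (if z = 0 then (fps_exp (1::complex) - 1) $ 1
           else eval_fps (fps_exp 1 - 1) z / z ^ 1)"
    unfolding fps_expm1_div_X_def by (intro eval_fps_shift) simp_all
  also have "eval_fps (fps_exp (1::complex) - 1) z = exp z - 1"
    by (subst eval_fps_diff) auto
  finally show ?thesis
    by simp
qed

lemma eval_fps_expm1_div_X_nonzero:
  fixes z :: complex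
  assumes "norm z < 2 * pi"
  shows "eval_fps fps_expm1_div_X z \<noteq> 0"
proof (cases "z = 0")
  case False
  have "exp z \<noteq> 1"
  proof
    assume "exp z = 1"
    then obtain n :: int where n: "Re z = 0" "Im z = of_int (2 * n) * pi"
      by (auto simp: exp_eq_1)
    with False have "n \<noteq> 0"
      using complex_eq_iff by auto
    then have "2 * pi \<le> \<bar>Im z\<bar>"
      using n pi_gt_zero by (simp add: abs_mult)
    with assms abs_Im_le_cmod[of z] show False
      by linarith
  qed
  with False show ?thesis
    by (simp add: eval_fps_expm1_div_X)
qed (simp add: eval_fps_expm1_div_X)

lemma bernoulli_num_sums_complex:
  fixes z :: complex
  assumes "norm z < 2 * pi"
  shows "(\<lambda>n. of_real (bernoulli_num n / fact n) * z ^ n) sums inverse (eval_fps fps_expm1_div_X z)"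
proof -
  have "(\<lambda>z. inverse (eval_fps fps_expm1_div_X z)) has_fps_expansion inverse (fps_expm1_div_X :: complex fps)"
    by (intro has_fps_expansion_inverse eval_fps_has_fps_expansion)
       (auto simp: fps_conv_radius_expm1_div_X)
  moreover have "(\<lambda>z. inverse (eval_fps fps_expm1_div_X (z::complex))) holomorphic_on eball 0 (ereal (2 * pi))"
    by (intro holomorphic_intros holomorphic_on_eval_fps)
       (auto simp: fps_conv_radius_expm1_div_X eval_fps_expm1_div_X_nonzero)
  ultimately show ?thesis
    using has_fps_expansion_imp_sums_complex assms
    by (fastforce simp: fps_nth_inverse_expm1_div_X)
qed

lemma bernoulli_num_sums:
  fixes t :: real
  assumes "\<bar>t\<bar> < 2 * pi"
  shows "(\<lambda>n. bernoulli_num n / fact n * t ^ n) sums (if t = 0 then 1 else t / (exp t - 1))"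
proof -
  have "(\<lambda>n. of_real (bernoulli_num n / fact n) * (complex_of_real t) ^ n)
          sums inverse (eval_fps fps_expm1_div_X (of_real t))"
    using assms by (intro bernoulli_num_sums_complex) simp
  also have "inverse (eval_fps fps_expm1_div_X (complex_of_real t)) =
             of_real (if t = 0 then 1 else t / (exp t - 1))"
    by (simp add: eval_fps_expm1_div_X exp_of_real[symmetric])
  also have "(\<lambda>n. of_real (bernoulli_num n / fact n) * (complex_of_real t) ^ n) =
             (\<lambda>n. of_real (bernoulli_num n / fact n * t ^ n))"
    by simp
  finally show ?thesis
    unfolding sums_of_real_iff .
qed

lemma summable_abs_bernoulli_num:
  fixes r :: real
  assumes "0 \<le> r" "r < 2 * pi"
  shows "summable (\<lambda>n. \<bar>bernoulli_num n / fact n\<bar> * r ^ n)"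
proof -
  define x where "x = (r + 2 * pi) / 2"
  have "summable (\<lambda>n. bernoulli_num n / fact n * x ^ n)"
    using bernoulli_num_sums[of x] assms by (auto simp: x_def sums_iff)
  from powser_insidea[OF this, of r] assms show ?thesis
    by (simp add: x_def abs_mult)
qed

section \<open>The Taylor remainder of the exponential\<close>

lemma Rrem_Suc: "Rrem (Suc n) x = Rrem n x - x ^ Suc n / fact (Suc n)"
  by (simp add: Rrem_def)

lemma Rrem_at_0 [simp]: "Rrem n 0 = 0"
  by (induction n) (simp_all add: Rrem_def)

lemma Rrem_has_real_derivative:
  "(Rrem n has_real_derivative Rrem n x + x ^ n / fact n) (at x)"
proof (induction n)
  case 0
  show ?case
    unfolding Rrem_def[abs_def] by (auto intro!: derivative_eq_intros)
next
  case (Suc n)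
  have "((\<lambda>x. x ^ Suc n / fact (Suc n)) has_real_derivative real (Suc n) * x ^ n / fact (Suc n)) (at x)"
    by (intro derivative_eq_intros) auto
  also have "real (Suc n) * x ^ n / fact (Suc n) = x ^ n / fact n"
    by (simp add: field_simps del: of_nat_Suc)
  finally have "((\<lambda>x. Rrem n x - x ^ Suc n / fact (Suc n)) has_real_derivative
                  (Rrem n x + x ^ n / fact n) - x ^ n / fact n) (at x)"
    by (intro DERIV_diff Suc)
  then show ?case
    by (simp add: Rrem_Suc[abs_def] Rrem_Suc)
qed

lemma abs_Rrem_le: "\<bar>Rrem n x\<bar> \<le> exp \<bar>x\<bar> * \<bar>x\<bar> ^ Suc n / fact (Suc n)"
proof -
  obtain t where t: "\<bar>t\<bar> \<le> \<bar>x\<bar>"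
    "exp x = (\<Sum>m<Suc n. x ^ m / fact m) + exp t / fact (Suc n) * x ^ Suc n"
    using Maclaurin_exp_le[of x "Suc n"] by blast
  then have "\<bar>Rrem n x\<bar> = exp t * \<bar>x\<bar> ^ Suc n / fact (Suc n)"
    by (simp add: Rrem_def lessThan_Suc_atMost abs_mult power_abs)
  also have "\<dots> \<le> exp \<bar>x\<bar> * \<bar>x\<bar> ^ Suc n / fact (Suc n)"
    using t(1) by (intro divide_right_mono mult_right_mono) auto
  finally show ?thesis .
qed

section \<open>The dilogarithm\<close>

lemma Li2_1: "Li2 1 = pi ^ 2 / 6"
  using inverse_squares_sums by (simp add: Li2_def sums_iff add.commute)

lemma continuous_on_Li2: "continuous_on {-1..1} Li2"
proof -
  have "uniform_limit {-1..1} (\<lambda>n x. \<Sum>i<n. x ^ Suc i / (real (Suc i))\<^sup>2) Li2 sequentially"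
    unfolding Li2_def[abs_def]
  proof (rule Weierstrass_m_test)
    fix n and x :: real
    assume "x \<in> {-1..1}"
    then have "\<bar>x\<bar> ^ Suc n \<le> 1"
      by (intro power_le_one) auto
    then show "norm (x ^ Suc n / (real (Suc n))\<^sup>2) \<le> 1 / (real (Suc n))\<^sup>2"
      using divide_right_mono[of "\<bar>x\<bar> ^ Suc n" 1 "(real (Suc n))\<^sup>2"]
      by (simp add: abs_mult power_abs)
  next
    show "summable (\<lambda>n. 1 / (real (Suc n))\<^sup>2)"
      using inverse_squares_sums by (simp add: sums_iff add.commute)
  qed
  then show ?thesis
    by (rule uniform_limit_theorem[rotated]) (auto intro!: always_eventually continuous_intros)
qed

lemma sums_minus_ln_1_minus:
  fixes u :: real
  assumes "\<bar>u\<bar> < 1"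
  shows "(\<lambda>n. u ^ Suc n / real (Suc n)) sums - ln (1 - u)"
proof -
  have "(\<lambda>n. - ((- (- u)) ^ n) / real n) sums ln (1 + - u)"
    using assms by (intro ln_series') simp
  then have "(\<lambda>n. - (u ^ n / real n)) sums ln (1 - u)"
    by simp
  then have "(\<lambda>n. u ^ n / real n) sums - ln (1 - u)"
    using sums_minus by fastforce
  then show ?thesis
    by (subst sums_Suc_iff) simp
qed

lemma Li2_has_real_derivative_at:
  fixes u :: real
  assumes "\<bar>u\<bar> < 1" "u \<noteq> 0"
  shows "(Li2 has_real_derivative - ln (1 - u) / u) (at u)"
proof -
  have "Li2 = (\<lambda>x. \<Sum>n. (1 / (real (Suc n))\<^sup>2) * x ^ Suc n)"
    by (simp add: Li2_def[abs_def])
  moreover have "DERIV (\<lambda>x. \<Sum>n. (1 / (real (Suc n))\<^sup>2) * x ^ Suc n) u :>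
                   (\<Sum>n. (1 / (real (Suc n))\<^sup>2) * real (Suc n) * u ^ n)"
  proof (rule DERIV_power_series'[where R = 1])
    fix x :: real
    assume "x \<in> {-1<..<1}"
    then have "summable (\<lambda>n. \<bar>x\<bar> ^ n)"
      by (intro summable_geometric) auto
    moreover have "norm ((1 / (real (Suc n))\<^sup>2) * real (Suc n) * x ^ n) \<le> \<bar>x\<bar> ^ n" for n
      using mult_left_mono[of 1 "1 + real n" "\<bar>x\<bar> ^ n"]
      by (simp add: power2_eq_square abs_mult power_abs divide_le_eq)
    ultimately show "summable (\<lambda>n. (1 / (real (Suc n))\<^sup>2) * real (Suc n) * x ^ n)"
      by (rule summable_comparison_test'[where N = 0])
  qed (use assms in auto)
  moreover have "(\<Sum>n. (1 / (real (Suc n))\<^sup>2) * real (Suc n) * u ^ n) =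
                  (\<Sum>n. u ^ Suc n / real (Suc n) / u)"
    using assms by (intro suminf_cong) (simp add: power2_eq_square divide_simps del: of_nat_Suc)
  moreover have "\<dots> = (\<Sum>n. u ^ Suc n / real (Suc n)) / u"
    by (rule suminf_divide[OF sums_summable[OF sums_minus_ln_1_minus[OF assms(1)]]])
  ultimately show ?thesis
    using sums_unique[OF sums_minus_ln_1_minus[OF assms(1)]] by simp
qed

lemma Li2_has_real_derivative [derivative_intros]:
  assumes "(f has_real_derivative f') (at x within S)" "\<bar>f x\<bar> < 1" "f x \<noteq> 0"
  shows "((\<lambda>x. Li2 (f x)) has_real_derivative - ln (1 - f x) / f x * f') (at x within S)"
  using DERIV_chain2[OF Li2_has_real_derivative_at[OF assms(2,3)] assms(1)] .

section \<open>The right-hand side\<close>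

definition bernoulli_Rrem_closed_form :: "real \<Rightarrow> real" where
  "bernoulli_Rrem_closed_form x = exp x * (x * ln (1 - exp (- x)) - Li2 (exp (- x)) + pi ^ 2 / 6)"

lemma bernoulli_Rrem_closed_form_has_real_derivative:
  assumes "0 < x"
  shows "(bernoulli_Rrem_closed_form has_real_derivative
            bernoulli_Rrem_closed_form x + x / (1 - exp (- x))) (at x)"
proof -
  have exp_minus_x: "0 < exp (- x)" "exp (- x) < 1" "exp (- x) * exp x = 1"
    using assms by (simp_all add: mult_exp_exp)
  show ?thesis
    unfolding bernoulli_Rrem_closed_form_def[abs_def]
    by (rule DERIV_cong, (use assms in \<open>auto intro!: derivative_eq_intros\<close>)[1])
       (use exp_minus_x in \<open>simp add: field_simps\<close>)
qed

lemma bernoulli_Rrem_closed_form_tendsto_0: "(bernoulli_Rrem_closed_form \<longlongrightarrow> 0) (at_right 0)"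
proof -
  have "((\<lambda>x::real. exp (- x)) \<longlongrightarrow> 1) (at_right 0)"
    by real_asymp
  moreover have "\<forall>\<^sub>F x in at_right 0. exp (- x) \<in> {-1..1::real}"
    unfolding eventually_at_right_field
    by (intro exI[of _ 1]) (auto intro: order.trans[OF _ exp_ge_zero])
  ultimately have Li2: "((\<lambda>x. Li2 (exp (- x))) \<longlongrightarrow> Li2 1) (at_right 0)"
    by (intro continuous_on_tendsto_compose[OF continuous_on_Li2, of _ 1]) simp_all
  have xlog: "((\<lambda>x::real. x * ln (1 - exp (- x))) \<longlongrightarrow> 0) (at_right 0)"
    by real_asymp
  have "((\<lambda>x. x * ln (1 - exp (- x)) - Li2 (exp (- x)) + pi ^ 2 / 6) \<longlongrightarrow> 0 - Li2 1 + pi ^ 2 / 6)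
          (at_right 0)"
    by (intro tendsto_add tendsto_diff xlog Li2 tendsto_const)
  then have "(bernoulli_Rrem_closed_form \<longlongrightarrow> exp 0 * (0 - Li2 1 + pi ^ 2 / 6)) (at_right 0)"
    unfolding bernoulli_Rrem_closed_form_def[abs_def]
    by (intro tendsto_mult tendsto_exp tendsto_ident_at)
  then show ?thesis
    by (simp add: Li2_1)
qed

section \<open>Termwise differentiation of the series\<close>

definition bernoulli_Rrem_sum :: "real \<Rightarrow> real" where
  "bernoulli_Rrem_sum x = (\<Sum>n. (-1) ^ n * bernoulli_num n * Rrem n x)"

lemma abs_bernoulli_Rrem_derivative_le:
  assumes "\<bar>x\<bar> \<le> a"
  shows "\<bar>(-1) ^ n * bernoulli_num n * (Rrem n x + x ^ n / fact n)\<bar>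
           \<le> \<bar>bernoulli_num n / fact n\<bar> * a ^ n * (a * exp a + 1)"
proof -
  have "\<bar>Rrem n x\<bar> \<le> exp \<bar>x\<bar> * \<bar>x\<bar> ^ Suc n / fact (Suc n)"
    by (rule abs_Rrem_le)
  also have "\<dots> \<le> exp a * a ^ Suc n / fact n"
    using assms by (intro frac_le mult_mono power_mono fact_mono) auto
  finally have "\<bar>Rrem n x + x ^ n / fact n\<bar> \<le> exp a * a ^ Suc n / fact n + a ^ n / fact n"
    using assms by (intro abs_triangle_ineq[THEN order_trans] add_mono)
                   (auto simp: power_abs intro!: divide_right_mono power_mono)
  also have "\<dots> = a ^ n / fact n * (a * exp a + 1)"
    by (simp add: field_simps)
  finally have "\<bar>bernoulli_num n\<bar> * \<bar>Rrem n x + x ^ n / fact n\<bar> \<le>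
                  \<bar>bernoulli_num n\<bar> * (a ^ n / fact n * (a * exp a + 1))"
    by (rule mult_left_mono) simp
  then show ?thesis
    by (simp add: abs_mult mult_ac)
qed

lemma bernoulli_Rrem_series:
  assumes "\<bar>x\<bar> < 2 * pi"
  shows "(\<lambda>n. (-1) ^ n * bernoulli_num n * Rrem n x) sums bernoulli_Rrem_sum x"
    and "(bernoulli_Rrem_sum has_real_derivative
            bernoulli_Rrem_sum x + (if x = 0 then 1 else x / (1 - exp (- x)))) (at x)"
proof -
  define a where "a = (\<bar>x\<bar> + 2 * pi) / 2"
  have a: "\<bar>x\<bar> < a" "a < 2 * pi"
    using assms by (auto simp: a_def)
  define f where "f n x = (-1) ^ n * bernoulli_num n * Rrem n x" for n x
  define f' where "f' n x = (-1) ^ n * bernoulli_num n * (Rrem n x + x ^ n / fact n)" for n x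
  have deriv_f: "(f n has_real_derivative f' n x) (at x within {-a..a})" for n x
    unfolding f_def[abs_def] f'_def
    by (rule has_field_derivative_at_within[OF DERIV_cmult[OF Rrem_has_real_derivative]])
  have unif: "uniformly_convergent_on {-a..a} (\<lambda>n x. \<Sum>i<n. f' i x)"
  proof (rule Weierstrass_m_test'_ev[OF always_eventually])
    show "\<forall>n. \<forall>x\<in>{-a..a}. norm (f' n x) \<le> \<bar>bernoulli_num n / fact n\<bar> * a ^ n * (a * exp a + 1)"
      unfolding f'_def real_norm_def
      by (metis abs_bernoulli_Rrem_derivative_le abs_le_iff atLeastAtMost_iff minus_le_iff)
    show "summable (\<lambda>n. \<bar>bernoulli_num n / fact n\<bar> * a ^ n * (a * exp a + 1))"
      using a by (intro summable_mult2 summable_abs_bernoulli_num) auto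
  qed
  have "0 \<in> {-a..a}" "summable (\<lambda>n. f n 0)" "x \<in> interior {-a..a}"
    using a by (auto simp: f_def)
  then have "summable (\<lambda>n. f n x)"
    and deriv: "((\<lambda>x. \<Sum>n. f n x) has_real_derivative (\<Sum>n. f' n x)) (at x)"
    using has_field_derivative_series'[where f = f and f' = f', OF convex_closed_interval(1) deriv_f unif]
    by blast+
  then show sums: "(\<lambda>n. (-1) ^ n * bernoulli_num n * Rrem n x) sums bernoulli_Rrem_sum x"
    by (simp add: f_def bernoulli_Rrem_sum_def summable_sums)
  have sign: "(if - x = 0 then 1 else - x / (exp (- x) - 1)) = (if x = 0 then 1 else x / (1 - exp (- x)))"
    by (auto simp: field_simps)
  \<comment> \<open>differentiating \<open>R\<^sub>n\<close> produces the Bernoulli generating function at \<open>-x\<close>\<close>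
  have "f' n x = f n x + bernoulli_num n / fact n * (- x) ^ n" for n
    by (simp add: f_def f'_def power_minus[of x] algebra_simps)
  moreover have "(\<lambda>n. bernoulli_num n / fact n * (- x) ^ n) sums
                   (if x = 0 then 1 else x / (1 - exp (- x)))"
    using bernoulli_num_sums[of "- x"] assms sign by simp
  ultimately have "(\<Sum>n. f' n x) = bernoulli_Rrem_sum x + (if x = 0 then 1 else x / (1 - exp (- x)))"
    using sums by (intro sums_unique[symmetric]) (simp add: f_def sums_add)
  with deriv show "(bernoulli_Rrem_sum has_real_derivative
            bernoulli_Rrem_sum x + (if x = 0 then 1 else x / (1 - exp (- x)))) (at x)"
    by (simp add: f_def bernoulli_Rrem_sum_def[abs_def])
qed

lemma bernoulli_Rrem_sum_tendsto_0: "(bernoulli_Rrem_sum \<longlongrightarrow> 0) (at_right 0)"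
proof -
  have "isCont bernoulli_Rrem_sum 0"
    by (rule DERIV_isCont[OF bernoulli_Rrem_series(2)]) simp
  moreover have "bernoulli_Rrem_sum 0 = 0"
    by (simp add: bernoulli_Rrem_sum_def)
  ultimately show ?thesis
    by (metis isCont_def at_le subset_UNIV tendsto_mono)
qed

theorem mainTheorem7:
  fixes y :: real
  assumes "0 < y" and "y < 2 * pi"
  shows "(\<lambda>n. (-1) ^ n * bernoulli_num n * Rrem n y) sums
           (exp y * (y * ln (1 - exp (- y)) - Li2 (exp (- y)) + pi ^ 2 / 6))"
proof -
  have "bernoulli_Rrem_sum y - bernoulli_Rrem_closed_form y = 0"
  proof (rule eq_0_if_has_real_derivative_self[OF \<open>0 < y\<close>])
    fix x :: real
    assume x: "x \<in> {0<..y}"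
    then have "\<bar>x\<bar> < 2 * pi" "x \<noteq> 0"
      using assms by auto
    with x show "((\<lambda>x. bernoulli_Rrem_sum x - bernoulli_Rrem_closed_form x) has_real_derivative
                   bernoulli_Rrem_sum x - bernoulli_Rrem_closed_form x) (at x)"
      using DERIV_diff[OF bernoulli_Rrem_series(2) bernoulli_Rrem_closed_form_has_real_derivative]
      by fastforce
  next
    show "((\<lambda>x. bernoulli_Rrem_sum x - bernoulli_Rrem_closed_form x) \<longlongrightarrow> 0) (at_right 0)"
      using tendsto_diff[OF bernoulli_Rrem_sum_tendsto_0 bernoulli_Rrem_closed_form_tendsto_0] by simp
  qed
  moreover have "(\<lambda>n. (-1) ^ n * bernoulli_num n * Rrem n y) sums bernoulli_Rrem_sum y"
    using assms by (intro bernoulli_Rrem_series(1)) simp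
  ultimately show ?thesis
    by (simp add: bernoulli_Rrem_closed_form_def)
qed

end
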